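(* Let $\mathfrak k$ be a Hilbert–Lie algebra, $\phi$ an automorphism of $\mathfrak k$ of finite order, and $\mathfrak t\subseteq\mathfrak k^\phi$ a maximal abelian subalgebra of the fixed point algebra. Then the centralizer $\mathfrak t_{\mathfrak k}:=\mathfrak z_{\mathfrak k}(\mathfrak t)=\{x\in\mathfrak k:[x,\mathfrak t]=0\}$ is a maximal abelian subalgebra of $\mathfrak k$.
   Context: A Hilbert–Lie algebra is a real Lie algebra with Hilbert space structure such that $\langle[x,y],z\rangle=\langle x,[y,z]\rangle$. Automorphisms are isometric Lie algebra automorphisms; $\mathfrak k^\phi=\{x\in\mathfrak k:\phi(x)=x\}$. *)

theory Defs
  imports "HOL-Analysis.Analysis"
begin

definition hilbert_lie :: "('a::{real_inner,complete_space} \<Rightarrow> 'a \<Rightarrow> 'a) \<Rightarrow> bool" where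
  "hilbert_lie br \<longleftrightarrow>
     bilinear br \<and>
     (\<forall>x. br x x = 0) \<and>
     (\<forall>x y z. br x (br y z) + br y (br z x) + br z (br x y) = 0) \<and>
     (\<forall>x y z. inner (br x y) z = inner x (br y z))"

definition hl_automorphism :: "('a::{real_inner,complete_space} \<Rightarrow> 'a \<Rightarrow> 'a) \<Rightarrow> ('a \<Rightarrow> 'a) \<Rightarrow> bool" where
  "hl_automorphism br \<phi> \<longleftrightarrow>
     linear \<phi> \<and> bij \<phi> \<and>
     (\<forall>x y. inner (\<phi> x) (\<phi> y) = inner x y) \<and>
     (\<forall>x y. \<phi> (br x y) = br (\<phi> x) (\<phi> y))"

definition finite_order :: "('a \<Rightarrow> 'a) \<Rightarrow> bool" where
  "finite_order \<phi> \<longleftrightarrow> (\<exists>n::nat. n > 0 \<and> \<phi> ^^ n = id)"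

definition fixed_points :: "('a \<Rightarrow> 'a) \<Rightarrow> 'a set" where
  "fixed_points \<phi> = {x. \<phi> x = x}"

definition lie_subalgebra :: "('a::real_vector \<Rightarrow> 'a \<Rightarrow> 'a) \<Rightarrow> 'a set \<Rightarrow> bool" where
  "lie_subalgebra br S \<longleftrightarrow> subspace S \<and> (\<forall>x\<in>S. \<forall>y\<in>S. br x y \<in> S)"

definition abelian_subalgebra :: "('a::real_vector \<Rightarrow> 'a \<Rightarrow> 'a) \<Rightarrow> 'a set \<Rightarrow> bool" where
  "abelian_subalgebra br S \<longleftrightarrow> lie_subalgebra br S \<and> (\<forall>x\<in>S. \<forall>y\<in>S. br x y = 0)"

definition maximal_abelian_in :: "('a::real_vector \<Rightarrow> 'a \<Rightarrow> 'a) \<Rightarrow> 'a set \<Rightarrow> 'a set \<Rightarrow> bool" where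
  "maximal_abelian_in br L t \<longleftrightarrow>
     abelian_subalgebra br t \<and> t \<subseteq> L \<and>
     (\<forall>s. abelian_subalgebra br s \<and> t \<subseteq> s \<and> s \<subseteq> L \<longrightarrow> s = t)"

definition centralizer :: "('a::real_vector \<Rightarrow> 'a \<Rightarrow> 'a) \<Rightarrow> 'a set \<Rightarrow> 'a set" where
  "centralizer br t = {x. \<forall>y\<in>t. br x y = 0}"

end

theory Submission
  imports Defs "HOL-Computational_Algebra.Primes"
begin

(* Let z = z_k(t) be the centralizer of t.  Since t is abelian, t \<subseteq> z, and every
   abelian subalgebra containing z centralizes t and hence lies in z; so z is maximal
   abelian as soon as z itself is abelian, which is the real content of the theorem.

   Two properties of z drive the argument: z is phi-invariant, and its phi-fixed
   points lie in t (otherwise t + Rx would be a larger abelian subalgebra of k^phi),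
   hence are central in z.  Complexify z to zC = z \<times> z.  As phi^N = id, averaging
   over the powers of phi splits every element of zC into eigenvectors of phi with
   eigenvalues omega^k, omega = exp(2 pi i / N).  For an eigenvector a with unimodular
   eigenvalue, [a, conj a] is phi-fixed, hence central, so ad a is a normal operator
   on zC (its adjoint is -ad (conj a)); for normal operators (ad a)^(m+1) c = 0 forces
   [a, c] = 0.  Given eigenvectors a, b for omega^k and omega^j, choose m, m' with
   k + m' (j + m k) \<equiv> 0 (mod N) (an elementary number-theoretic lemma).  Then
   c = (ad a)^m b has eigenvalue omega^(j+mk) and (ad c)^m' a is phi-fixed, hence
   central; normality of ad c gives [c, a] = 0, i.e. (ad a)^(m+1) b = 0, and
   normality of ad a gives [a, b] = 0.  Thus all eigenvectors commute and z is abelian. *)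

(* For coprime j, k a suitable shift j + r k is coprime to N: take r the product of
   the primes of N not dividing j. *)
lemma coprime_shift:
  fixes j k N :: nat
  assumes coprime: "coprime j k" and N: "N > 0"
  shows "\<exists>r. coprime (j + r * k) N"
proof -
  define Q where "Q = {p \<in> prime_factors N. \<not> p dvd j}"
  define r where "r = \<Prod>Q"
  have no_common_prime: "\<not> p dvd j + r * k" if p: "prime p" "p dvd N" for p
  proof
    assume p_dvd: "p dvd j + r * k"
    have "finite Q" by (simp add: Q_def)
    then have "p dvd r \<longleftrightarrow> (\<exists>q\<in>Q. p dvd q)"
      unfolding r_def using p(1) by (simp add: prime_dvd_prod_iff)
    also have "\<dots> \<longleftrightarrow> p \<in> Q"
      using p by (auto simp: Q_def in_prime_factors_iff N dest: primes_dvd_imp_eq[OF p(1)])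
    finally have p_dvd_r: "p dvd r \<longleftrightarrow> \<not> p dvd j"
      using p N by (simp add: Q_def in_prime_factors_iff)
    show False
    proof (cases "p dvd j")
      case True
      then have "p dvd r * k" using p_dvd by (simp add: dvd_add_right_iff)
      moreover have "\<not> p dvd k" using True coprime p(1)
        by (metis coprime_common_divisor_nat not_prime_1)
      ultimately show False using p_dvd_r True p(1) by (simp add: prime_dvd_mult_iff)
    next
      case False
      then have "p dvd j" using p_dvd p_dvd_r by (simp add: dvd_add_left_iff)
      with False show False ..
    qed
  qed
  have "coprime (j + r * k) N"
  proof (rule ccontr)
    assume "\<not> coprime (j + r * k) N"
    then have "gcd (j + r * k) N \<noteq> 1" by (simp add: coprime_iff_gcd_eq_1)
    then obtain p where "prime p" "p dvd gcd (j + r * k) N" using prime_factor_nat by blast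
    then show False using no_common_prime by auto
  qed
  then show ?thesis ..
qed

lemma gcd_shift_dvd:
  fixes j k N :: nat
  assumes N: "N > 0"
  shows "\<exists>m. gcd (j + m * k) N dvd k"
proof (cases "gcd j k = 0")
  case True
  then show ?thesis by simp
next
  case False
  define g where "g = gcd j k"
  obtain j' k' where jk: "j = j' * g" "k = k' * g" "coprime j' k'"
    using gcd_coprime_exists[of j k] False unfolding g_def by blast
  obtain r where r: "coprime (j' + r * k') N" using coprime_shift[OF jk(3) N] ..
  have "gcd (j + r * k) N = gcd (g * (j' + r * k')) N" by (simp add: jk algebra_simps)
  also have "\<dots> = gcd g N"
    by (rule gcd_mult_left_right_cancel) (use r in \<open>simp add: coprime_commute\<close>)
  finally have "gcd (j + r * k) N dvd g" by simp
  then show ?thesis using jk(2) by (metis dvd_mult)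
qed

lemma shift_solvable:
  fixes j k N :: nat
  assumes N: "N > 0"
  shows "\<exists>m m'. N dvd k + m' * (j + m * k)"
proof -
  obtain m where "gcd (j + m * k) N dvd k" using gcd_shift_dvd[OF N] ..
  then obtain e where e: "k = gcd (j + m * k) N * e" ..
  show ?thesis
  proof (cases "j + m * k = 0")
    case True
    then show ?thesis using e by auto
  next
    case False
    then obtain x y where xy: "(j + m * k) * x = N * y + gcd (j + m * k) N"
      using bezout_nat by blast
    obtain n where n: "N = Suc n" using N by (cases N) auto
    have "k + (x * e * n) * (j + m * k) = k + n * e * ((j + m * k) * x)"
      by (simp add: algebra_simps)
    also have "\<dots> = N * (k + n * e * y)"
      unfolding xy using e n by (simp add: algebra_simps)
    finally show ?thesis by (metis dvd_triv_left)
  qed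
qed

lemma normal_operator_kernel:
  fixes A B :: "'b::real_inner \<Rightarrow> 'b"
  assumes adjoint: "\<And>x y. inner (A x) y = - inner x (B y)"
    and commute: "\<And>d. d \<in> V \<Longrightarrow> A (B d) = B (A d)"
    and invariant: "\<And>d. d \<in> V \<Longrightarrow> A d \<in> V"
  shows "c \<in> V \<Longrightarrow> (A ^^ Suc m) c = 0 \<Longrightarrow> A c = 0"
proof (induction m arbitrary: c)
  case 0
  then show ?case by simp
next
  case (Suc m)
  have B0: "B 0 = 0"
    using adjoint[of "B 0" 0] by simp
  have "(A ^^ Suc m) (A c) = 0"
    using Suc.prems(2) by (simp only: funpow_Suc_right o_def)
  then have AAc: "A (A c) = 0"
    using Suc.IH invariant[OF Suc.prems(1)] by blast
  have "inner (B (A c)) (B (A c)) = - inner (A (B (A c))) (A c)"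
    using adjoint[of "B (A c)" "A c"] by (simp add: inner_commute)
  also have "A (B (A c)) = 0"
    using commute[OF invariant[OF Suc.prems(1)]] AAc B0 by simp
  finally have "B (A c) = 0" by simp
  then have "inner (A c) (A c) = 0"
    using adjoint[of c "A c"] by simp
  then show ?case by simp
qed

(* The complexification of a real vector space V is V \<times> V, with (x, y) read as
   x + iy; cscale is multiplication by a complex number and cconj is conjugation. *)
definition cscale :: "complex \<Rightarrow> 'b::real_vector \<times> 'b \<Rightarrow> 'b \<times> 'b" where
  "cscale w a = (Re w *\<^sub>R fst a - Im w *\<^sub>R snd a, Re w *\<^sub>R snd a + Im w *\<^sub>R fst a)"

definition cconj :: "'b::real_vector \<times> 'b \<Rightarrow> 'b \<times> 'b" where
  "cconj a = (fst a, - snd a)"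

lemma cscale_mult: "cscale z (cscale w a) = cscale (z * w) a"
  by (simp add: cscale_def algebra_simps)

lemma cscale_one [simp]: "cscale 1 a = a"
  by (simp add: cscale_def)

lemma cscale_of_nat: "cscale (of_nat n) a = real n *\<^sub>R a"
  by (simp add: cscale_def prod_eq_iff)

lemma linear_cscale: "linear (cscale w)"
  by (rule linearI) (simp_all add: cscale_def algebra_simps)

lemma linear_cscale_scalar: "linear (\<lambda>w. cscale w a)"
  by (rule linearI) (simp_all add: cscale_def algebra_simps)

lemma cconj_cscale: "cconj (cscale w a) = cscale (cnj w) (cconj a)"
  by (simp add: cconj_def cscale_def algebra_simps)

lemma map_prod_cscale:
  "linear f \<Longrightarrow> map_prod f f (cscale w a) = cscale w (map_prod f f a)"
  by (simp add: cscale_def map_prod_def split_def linear_add linear_diff linear_scale)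

lemma map_prod_cconj:
  "linear f \<Longrightarrow> map_prod f f (cconj a) = cconj (map_prod f f a)"
  by (simp add: cconj_def map_prod_def split_def linear_neg)

lemma fixed_points_subspace: "linear f \<Longrightarrow> subspace (fixed_points f)"
  by (simp add: subspace_def fixed_points_def linear_add linear_scale linear_0)

lemma funpow_map_prod:
  fixes f :: "'b \<Rightarrow> 'b"
  shows "(map_prod f f ^^ m) a = ((f ^^ m) (fst a), (f ^^ m) (snd a))"
  by (induction m) simp_all

(* The axioms of a Hilbert-Lie algebra. *)
locale hilbert_lie_algebra =
  fixes br :: "'a::real_inner \<Rightarrow> 'a \<Rightarrow> 'a"
  assumes bilinear_br: "bilinear br"
    and br_self: "\<And>x. br x x = 0"
    and jacobi: "\<And>x y z. br x (br y z) + br y (br z x) + br z (br x y) = 0"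
    and br_invariant: "\<And>x y z. inner (br x y) z = inner x (br y z)"

lemma hilbert_lie_algebraI: "hilbert_lie br \<Longrightarrow> hilbert_lie_algebra br"
  unfolding hilbert_lie_def by unfold_locales blast+

context hilbert_lie_algebra
begin

lemmas br_linear =
  bilinear_ladd[OF bilinear_br] bilinear_radd[OF bilinear_br]
  bilinear_lmul[OF bilinear_br] bilinear_rmul[OF bilinear_br]
  bilinear_lneg[OF bilinear_br] bilinear_rneg[OF bilinear_br]
  bilinear_lzero[OF bilinear_br] bilinear_rzero[OF bilinear_br]
  bilinear_lsub[OF bilinear_br] bilinear_rsub[OF bilinear_br]

lemma br_anti: "br y x = - br x y"
proof -
  have "0 = br (x + y) (x + y)" by (simp only: br_self)
  also have "\<dots> = br x x + br x y + (br y x + br y y)" by (simp add: br_linear)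
  also have "\<dots> = br x y + br y x" by (simp add: br_self)
  finally have "br x y + br y x = 0" by simp
  then show ?thesis by (simp add: eq_neg_iff_add_eq_0 add.commute)
qed

lemma br_derivation: "br x (br y z) = br (br x y) z + br y (br x z)"
proof -
  have "br y (br z x) = - br y (br x z)" by (subst br_anti) (simp add: br_linear)
  moreover have "br z (br x y) = - br (br x y) z" by (rule br_anti)
  moreover have "br x (br y z) = - (br y (br z x) + br z (br x y))"
    unfolding eq_neg_iff_add_eq_0 using jacobi[of x y z] by (simp only: add.assoc)
  ultimately show ?thesis by simp
qed

lemma ad_skew: "inner (br x y) z = - inner y (br x z)"
  by (subst br_anti) (simp add: br_invariant)

lemma centralizer_subspace: "subspace (centralizer br t)"
  by (auto simp: subspace_def centralizer_def br_linear)

lemma centralizer_br: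
  assumes "x \<in> centralizer br t" and "y \<in> centralizer br t"
  shows "br x y \<in> centralizer br t"
proof -
  have "br (br x y) s = 0" if "s \<in> t" for s
  proof -
    have "br s x = 0" and "br s y = 0"
      using assms that br_anti[of x s] br_anti[of y s] by (auto simp: centralizer_def)
    then show ?thesis
      using br_derivation[of s x y] br_anti[of "br x y" s] by (simp add: br_linear)
  qed
  then show ?thesis by (simp add: centralizer_def)
qed

(* A maximal abelian subalgebra t of a subspace L contains every element of L that
   centralizes t, since t + Rx is again abelian. *)
lemma maximal_abelian_centralizing:
  assumes max: "maximal_abelian_in br L t" and L: "subspace L"
    and x: "x \<in> L" "x \<in> centralizer br t"
  shows "x \<in> t"
proof -
  have t: "subspace t" "\<And>u v. u \<in> t \<Longrightarrow> v \<in> t \<Longrightarrow> br u v = 0" "t \<subseteq> L"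
    using max by (auto simp: maximal_abelian_in_def abelian_subalgebra_def lie_subalgebra_def)
  define s where "s = span (insert x t)"
  have decompose: "\<exists>u c. a = u + c *\<^sub>R x \<and> u \<in> t" if "a \<in> s" for a
  proof -
    obtain c where "a - c *\<^sub>R x \<in> span t"
      using \<open>a \<in> s\<close> by (auto simp: s_def span_insert)
    then show ?thesis using span_eq_iff[of t] t(1) by (metis diff_add_cancel)
  qed
  have s_abelian: "br a b = 0" if "a \<in> s" "b \<in> s" for a b
  proof -
    obtain u c v d where "a = u + c *\<^sub>R x" "u \<in> t" "b = v + d *\<^sub>R x" "v \<in> t"
      using decompose[OF \<open>a \<in> s\<close>] decompose[OF \<open>b \<in> s\<close>] by blast
    moreover have "br x v = 0" "br u x = 0"
      using x(2) \<open>u \<in> t\<close> \<open>v \<in> t\<close> br_anti[of x u] by (auto simp: centralizer_def)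
    ultimately show ?thesis by (simp add: br_linear t(2) br_self)
  qed
  have "abelian_subalgebra br s"
    using s_abelian subspace_span
    by (simp add: s_def abelian_subalgebra_def lie_subalgebra_def span_zero)
  moreover have "t \<subseteq> s" "x \<in> s" by (auto simp: s_def intro: span_base)
  moreover have "s \<subseteq> L"
    unfolding s_def using t(3) x(1) L by (intro span_minimal) auto
  ultimately show ?thesis using max by (auto simp: maximal_abelian_in_def)
qed

(* If the centralizer of an abelian subalgebra t is abelian, it is maximal abelian:
   an abelian subalgebra containing it contains t, hence centralizes t. *)
lemma centralizer_maximal_abelian:
  assumes t: "abelian_subalgebra br t"
    and z_abelian: "\<And>x y. x \<in> centralizer br t \<Longrightarrow> y \<in> centralizer br t \<Longrightarrow> br x y = 0"
  shows "maximal_abelian_in br UNIV (centralizer br t)"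
proof -
  have t_sub: "t \<subseteq> centralizer br t"
    using t by (auto simp: abelian_subalgebra_def centralizer_def)
  have "0 \<in> centralizer br t"
    using centralizer_subspace by (rule subspace_0)
  then have z: "abelian_subalgebra br (centralizer br t)"
    using centralizer_subspace z_abelian by (simp add: abelian_subalgebra_def lie_subalgebra_def)
  have "s \<subseteq> centralizer br t"
    if s: "abelian_subalgebra br s" "centralizer br t \<subseteq> s" for s
  proof
    fix x assume "x \<in> s"
    have "br x y = 0" if "y \<in> t" for y
      using s(1) s(2) t_sub \<open>x \<in> s\<close> that unfolding abelian_subalgebra_def by blast
    then show "x \<in> centralizer br t" by (simp add: centralizer_def)
  qed
  with z show ?thesis
    unfolding maximal_abelian_in_def by blast
qed

definition cbr :: "'a \<times> 'a \<Rightarrow> 'a \<times> 'a \<Rightarrow> 'a \<times> 'a" where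
  "cbr a b = (br (fst a) (fst b) - br (snd a) (snd b), br (fst a) (snd b) + br (snd a) (fst b))"

lemma bilinear_cbr: "bilinear cbr"
  unfolding bilinear_def
  by (auto intro!: linearI simp: cbr_def br_linear algebra_simps)

lemma cbr_anti: "cbr b a = - cbr a b"
  by (simp add: cbr_def br_anti[of "fst a"] br_anti[of "snd a"] algebra_simps)

lemma cbr_derivation: "cbr a (cbr b c) = cbr (cbr a b) c + cbr b (cbr a c)"
  by (simp add: cbr_def br_linear br_derivation[of "fst a"] br_derivation[of "snd a"] algebra_simps)

lemma cbr_skew: "inner (cbr a b) e = - inner b (cbr (cconj a) e)"
  by (cases b, cases e)
    (simp add: cbr_def cconj_def ad_skew[of "fst a"] ad_skew[of "snd a"] br_linear algebra_simps)

lemma cbr_cscale_left: "cbr (cscale w a) b = cscale w (cbr a b)"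
  by (simp add: cbr_def cscale_def br_linear algebra_simps)

lemma cbr_cscale_right: "cbr a (cscale w b) = cscale w (cbr a b)"
  by (simp add: cbr_def cscale_def br_linear algebra_simps)

end

locale centralizer_automorphism = hilbert_lie_algebra br
  for br :: "'a::real_inner \<Rightarrow> 'a \<Rightarrow> 'a" +
  fixes \<phi> :: "'a \<Rightarrow> 'a" and t :: "'a set"
  assumes linear_phi: "linear \<phi>"
    and phi_br: "\<And>x y. \<phi> (br x y) = br (\<phi> x) (\<phi> y)"
    and t_fixed: "\<And>x. x \<in> t \<Longrightarrow> \<phi> x = x"
    and centralizer_fixed: "\<And>x. x \<in> centralizer br t \<Longrightarrow> \<phi> x = x \<Longrightarrow> x \<in> t"
begin

abbreviation zC :: "('a \<times> 'a) set" where "zC \<equiv> centralizer br t \<times> centralizer br t"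
abbreviation tC :: "('a \<times> 'a) set" where "tC \<equiv> t \<times> t"
abbreviation Phi :: "'a \<times> 'a \<Rightarrow> 'a \<times> 'a" where "Phi \<equiv> map_prod \<phi> \<phi>"

definition eigenspace :: "complex \<Rightarrow> ('a \<times> 'a) set" where
  "eigenspace w = {a \<in> zC. Phi a = cscale w a}"

lemma centralizer_phi:
  assumes x: "x \<in> centralizer br t"
  shows "\<phi> x \<in> centralizer br t"
proof -
  have "br (\<phi> x) y = 0" if "y \<in> t" for y
  proof -
    have "br (\<phi> x) y = \<phi> (br x y)" by (simp add: phi_br t_fixed[OF that])
    also have "\<dots> = 0" using x that by (simp add: centralizer_def linear_0[OF linear_phi])
    finally show ?thesis .
  qed
  then show ?thesis by (simp add: centralizer_def)
qed

lemma zC_subspace: "subspace zC"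
  by (intro subspace_Times centralizer_subspace)

lemma zC_cbr: "a \<in> zC \<Longrightarrow> b \<in> zC \<Longrightarrow> cbr a b \<in> zC"
  using centralizer_subspace by (auto simp: cbr_def centralizer_br subspace_add subspace_diff)

lemma zC_cscale: "a \<in> zC \<Longrightarrow> cscale w a \<in> zC"
  using centralizer_subspace by (auto simp: cscale_def subspace_add subspace_diff subspace_scale)

lemma zC_cconj: "a \<in> zC \<Longrightarrow> cconj a \<in> zC"
  using centralizer_subspace by (auto simp: cconj_def subspace_neg)

lemma zC_Phi_pow: "a \<in> zC \<Longrightarrow> (Phi ^^ m) a \<in> zC"
  by (induction m) (auto simp: centralizer_phi)

lemma cbr_central: "a \<in> zC \<Longrightarrow> c \<in> tC \<Longrightarrow> cbr a c = 0"
  by (auto simp: cbr_def centralizer_def prod_eq_iff)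

lemma linear_Phi: "linear Phi"
  by (rule linearI) (auto simp: linear_add[OF linear_phi] linear_scale[OF linear_phi])

lemma Phi_cbr: "Phi (cbr a b) = cbr (Phi a) (Phi b)"
  by (simp add: cbr_def map_prod_def split_def phi_br
      linear_add[OF linear_phi] linear_diff[OF linear_phi])

lemma eigenspace_cbr:
  "a \<in> eigenspace w \<Longrightarrow> b \<in> eigenspace v \<Longrightarrow> cbr a b \<in> eigenspace (w * v)"
  by (simp add: eigenspace_def zC_cbr Phi_cbr cbr_cscale_left cbr_cscale_right cscale_mult
      mult.commute)

lemma eigenspace_cconj: "a \<in> eigenspace w \<Longrightarrow> cconj a \<in> eigenspace (cnj w)"
  by (simp add: eigenspace_def zC_cconj map_prod_cconj[OF linear_phi] cconj_cscale)

lemma eigenspace_one: "eigenspace 1 \<subseteq> tC"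
  by (auto simp: eigenspace_def centralizer_fixed)

lemma eigenspace_cbr_iter:
  "a \<in> eigenspace w \<Longrightarrow> b \<in> eigenspace v \<Longrightarrow> (cbr a ^^ m) b \<in> eigenspace (w ^ m * v)"
proof (induction m)
  case 0
  then show ?case by simp
next
  case (Suc m)
  then have "cbr a ((cbr a ^^ m) b) \<in> eigenspace (w * (w ^ m * v))"
    by (intro eigenspace_cbr) auto
  then show ?case by (simp add: mult.assoc)
qed

lemma eigenvector_normal:
  assumes a: "a \<in> eigenspace w" and w: "cmod w = 1"
  shows "cbr a (cconj a) \<in> tC"
proof -
  have "w * cnj w = 1"
    using w complex_norm_square[of w] by simp
  then have "cbr a (cconj a) \<in> eigenspace 1"
    using eigenspace_cbr[OF a eigenspace_cconj[OF a]] by simp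
  then show ?thesis using eigenspace_one by blast
qed

(* Hence ad a commutes with its adjoint on zC, and the kernel criterion applies. *)
lemma ad_eigenvector_kernel:
  assumes a: "a \<in> eigenspace w" and w: "cmod w = 1"
    and c: "c \<in> zC" and nil: "(cbr a ^^ Suc m) c = 0"
  shows "cbr a c = 0"
proof -
  have aZ: "a \<in> zC" using a by (simp add: eigenspace_def)
  have commute: "cbr a (cbr (cconj a) d) = cbr (cconj a) (cbr a d)" if "d \<in> zC" for d
    using cbr_derivation[of a "cconj a" d] cbr_anti[of d "cbr a (cconj a)"]
      cbr_central[OF that eigenvector_normal[OF a w]] by simp
  show ?thesis
    using normal_operator_kernel[of "cbr a" "cbr (cconj a)" zC,
        OF cbr_skew commute zC_cbr[OF aZ] c nil] .
qed

(* If w^m v = 1 then (ad a)^m b lies in tC, so (ad a)^(m+1) b = 0 and [a, b] = 0. *)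
lemma eigenvectors_commute_direct:
  assumes a: "a \<in> eigenspace w" "cmod w = 1" and b: "b \<in> eigenspace v"
    and unit: "w ^ m * v = 1"
  shows "cbr a b = 0"
proof (rule ad_eigenvector_kernel[OF a, of b m])
  show "b \<in> zC" using b by (simp add: eigenspace_def)
  have "(cbr a ^^ m) b \<in> tC"
    using eigenspace_cbr_iter[OF a(1) b, of m] unit eigenspace_one by auto
  moreover have "a \<in> zC" using a by (simp add: eigenspace_def)
  ultimately show "(cbr a ^^ Suc m) b = 0" by (simp add: cbr_central)
qed

(* Two-step version: apply the previous lemma to c = (ad a)^m b and a. *)
lemma eigenvectors_commute_indirect:
  assumes a: "a \<in> eigenspace w" "cmod w = 1" and b: "b \<in> eigenspace v" "cmod v = 1"
    and unit: "w * (w ^ m * v) ^ m' = 1"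
  shows "cbr a b = 0"
proof (rule ad_eigenvector_kernel[OF a, of b m])
  show "b \<in> zC" using b by (simp add: eigenspace_def)
  let ?c = "(cbr a ^^ m) b"
  have "?c \<in> eigenspace (w ^ m * v)" using eigenspace_cbr_iter[OF a(1) b(1)] .
  moreover have "cmod (w ^ m * v) = 1" using a(2) b(2) by (simp add: norm_mult norm_power)
  ultimately have "cbr ?c a = 0"
    using eigenvectors_commute_direct[OF _ _ a(1)] unit by (simp add: mult.commute)
  then show "(cbr a ^^ Suc m) b = 0" using cbr_anti[of a ?c] by simp
qed

lemma eigenvectors_commute:
  assumes root: "\<omega> ^ N = 1" and N: "N > 0"
    and a: "a \<in> eigenspace (\<omega> ^ k)" and b: "b \<in> eigenspace (\<omega> ^ j)"
  shows "cbr a b = 0"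
proof -
  have "cmod \<omega> ^ N = 1 ^ N"
    using root by (metis norm_one norm_power power_one)
  then have "cmod \<omega> = 1"
    using N power_eq_iff_eq_base[of N "cmod \<omega>" 1] by simp
  then have unit: "cmod (\<omega> ^ n) = 1" for n by (simp add: norm_power)
  obtain m m' where "N dvd k + m' * (j + m * k)" using shift_solvable[OF N] by blast
  then obtain q where q: "k + m' * (j + m * k) = N * q" by (auto elim: dvdE)
  have "\<omega> ^ k * ((\<omega> ^ k) ^ m * \<omega> ^ j) ^ m' = \<omega> ^ (k + m' * (j + m * k))"
    by (simp add: power_add power_mult[symmetric] algebra_simps)
  also have "\<dots> = 1" unfolding q by (simp add: power_mult root)
  finally show ?thesis
    using eigenvectors_commute_indirect[OF a unit b unit] by blast
qed

end

locale finite_order_automorphism = centralizer_automorphism br \<phi> t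
  for br :: "'a::real_inner \<Rightarrow> 'a \<Rightarrow> 'a" and \<phi> t +
  fixes N :: nat
  assumes N_pos: "N > 0" and phi_order: "\<phi> ^^ N = id"
begin

definition \<omega> :: complex where "\<omega> = cis (2 * pi / real N)"

lemma \<omega>_pow: "\<omega> ^ m = cis (2 * pi * real m / real N)"
  unfolding \<omega>_def Complex.DeMoivre by (simp add: mult_ac)

lemma \<omega>_root: "\<omega> ^ N = 1"
  using N_pos by (simp add: \<omega>_pow)

lemma cnj_\<omega>_root: "cnj \<omega> ^ N = 1"
  by (metis complex_cnj_one complex_cnj_power \<omega>_root)

lemma \<omega>_pow_neq_one:
  assumes m: "0 < m" "m < N"
  shows "\<omega> ^ m \<noteq> 1"
proof
  assume "\<omega> ^ m = 1"
  have inj: "inj_on (\<lambda>k. cis (2 * pi * real k / real N)) {..<N}"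
    using Complex.bij_betw_roots_unity[OF N_pos] by (rule bij_betw_imp_inj_on)
  have "(\<lambda>k. cis (2 * pi * real k / real N)) m = (\<lambda>k. cis (2 * pi * real k / real N)) 0"
    using \<open>\<omega> ^ m = 1\<close> by (simp add: \<omega>_pow)
  then have "m = 0" by (rule inj_onD[OF inj]) (use m in auto)
  with m show False by simp
qed

lemma sum_roots_power:
  assumes m: "0 < m" "m < N"
  shows "(\<Sum>k<N. cnj \<omega> ^ (k * m)) = 0"
proof -
  define q where "q = cnj \<omega> ^ m"
  have "q \<noteq> 1" using \<omega>_pow_neq_one[OF m]
    by (metis q_def complex_cnj_one complex_cnj_power complex_cnj_cnj)
  have "(\<Sum>k<N. cnj \<omega> ^ (k * m)) = (\<Sum>k<N. q ^ k)"
    by (simp add: q_def power_mult[symmetric] mult.commute)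
  also have "\<dots> = (q ^ N - 1) / (q - 1)" using \<open>q \<noteq> 1\<close> by (rule geometric_sum)
  also have "q ^ N = 1"
    by (simp add: q_def power_mult[symmetric] mult.commute[of m] power_mult cnj_\<omega>_root)
  finally show ?thesis by simp
qed

definition proj :: "nat \<Rightarrow> 'a \<times> 'a \<Rightarrow> 'a \<times> 'a" where
  "proj k a = (\<Sum>m<N. cscale (cnj \<omega> ^ (k * m)) ((Phi ^^ m) a))"

lemma proj_eigenspace:
  assumes a: "a \<in> zC"
  shows "proj k a \<in> eigenspace (\<omega> ^ k)"
proof -
  define G where "G m = cscale (cnj \<omega> ^ (k * m)) ((Phi ^^ m) a)" for m
  have step: "Phi (G m) = cscale (\<omega> ^ k) (G (Suc m))" for m
  proof -
    have "\<omega> ^ k * cnj \<omega> ^ (k * Suc m) = (\<omega> * cnj \<omega>) ^ k * cnj \<omega> ^ (k * m)"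
      by (simp add: power_add algebra_simps)
    also have "\<omega> * cnj \<omega> = 1"
      using complex_norm_square[of \<omega>] by (simp add: \<omega>_def)
    finally show ?thesis
      by (simp add: G_def cscale_mult map_prod_cscale[OF linear_phi])
  qed
  have shift: "(\<Sum>m<N. G (Suc m)) = (\<Sum>m<N. G m)"
  proof -
    have "G N = G 0"
      by (simp add: G_def funpow_map_prod phi_order power_mult cnj_\<omega>_root mult.commute[of k]
          power_mult[symmetric])
    then show ?thesis using sum.lessThan_Suc_shift[of G N] sum.lessThan_Suc[of G N] by simp
  qed
  have proj_G: "proj k a = (\<Sum>m<N. G m)" by (simp add: proj_def G_def)
  have "Phi (proj k a) = (\<Sum>m<N. Phi (G m))"
    unfolding proj_G by (rule linear_sum[OF linear_Phi])
  also have "\<dots> = cscale (\<omega> ^ k) (\<Sum>m<N. G (Suc m))"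
    by (simp add: step linear_sum[OF linear_cscale])
  finally have "Phi (proj k a) = cscale (\<omega> ^ k) (proj k a)"
    by (simp add: shift proj_G)
  moreover have "proj k a \<in> zC"
    unfolding proj_def using zC_subspace
    by (intro subspace_sum zC_cscale zC_Phi_pow a)
  ultimately show ?thesis by (simp add: eigenspace_def)
qed

lemma sum_proj: "(\<Sum>k<N. proj k a) = real N *\<^sub>R a"
proof -
  have "(\<Sum>k<N. proj k a) = (\<Sum>m<N. cscale (\<Sum>k<N. cnj \<omega> ^ (k * m)) ((Phi ^^ m) a))"
    unfolding proj_def by (subst sum.swap) (simp add: linear_sum[OF linear_cscale_scalar])
  also have "\<dots> = (\<Sum>m<N. if m = 0 then real N *\<^sub>R a else 0)"
    by (intro sum.cong refl)
      (auto simp: sum_roots_power cscale_of_nat linear_0[OF linear_cscale_scalar])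
  also have "\<dots> = real N *\<^sub>R a" using N_pos by simp
  finally show ?thesis .
qed

(* Main step: the centralizer z of t is abelian.  Decomposing (x, 0) and (y, 0) into
   eigenvectors, all brackets of the components vanish. *)
lemma centralizer_abelian:
  assumes x: "x \<in> centralizer br t" and y: "y \<in> centralizer br t"
  shows "br x y = 0"
proof -
  have xy: "(x, 0) \<in> zC" "(y, 0) \<in> zC"
    using x y subspace_0[OF centralizer_subspace] by auto
  have "(real N * real N) *\<^sub>R cbr (x, 0) (y, 0)
      = cbr (real N *\<^sub>R (x, 0)) (real N *\<^sub>R (y, 0))"
    by (simp only: bilinear_lmul[OF bilinear_cbr] bilinear_rmul[OF bilinear_cbr] scaleR_scaleR)
  also have "\<dots> = cbr (\<Sum>k<N. proj k (x, 0)) (\<Sum>j<N. proj j (y, 0))"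
    by (simp only: sum_proj)
  also have "\<dots> = 0"
    using eigenvectors_commute[OF \<omega>_root N_pos proj_eigenspace[OF xy(1)]
        proj_eigenspace[OF xy(2)]] by (simp add: bilinear_sum[OF bilinear_cbr])
  finally have "cbr (x, 0) (y, 0) = 0" using N_pos by simp
  then show ?thesis by (simp add: cbr_def br_linear prod_eq_iff)
qed

end

theorem lemmaD2:
  fixes br :: "'a::{real_inner,complete_space} \<Rightarrow> 'a \<Rightarrow> 'a"
    and \<phi> :: "'a \<Rightarrow> 'a" and t :: "'a set"
  assumes "hilbert_lie br"
    and "hl_automorphism br \<phi>"
    and "finite_order \<phi>"
    and "maximal_abelian_in br (fixed_points \<phi>) t"
  shows "maximal_abelian_in br UNIV (centralizer br t)"
proof -
  interpret hilbert_lie_algebra br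
    using assms(1) by (rule hilbert_lie_algebraI)
  have linear: "linear \<phi>" and hom: "\<And>x y. \<phi> (br x y) = br (\<phi> x) (\<phi> y)"
    using assms(2) by (auto simp: hl_automorphism_def)
  obtain N where N: "N > 0" "\<phi> ^^ N = id"
    using assms(3) by (auto simp: finite_order_def)
  have t_abelian: "abelian_subalgebra br t" and t_fixed: "\<And>x. x \<in> t \<Longrightarrow> \<phi> x = x"
    using assms(4) by (auto simp: maximal_abelian_in_def fixed_points_def)
  have centralizer_fixed: "x \<in> t" if "x \<in> centralizer br t" "\<phi> x = x" for x
    using maximal_abelian_centralizing[OF assms(4) fixed_points_subspace[OF linear]] that
    by (simp add: fixed_points_def)
  interpret finite_order_automorphism br \<phi> t N
    using linear hom t_fixed centralizer_fixed N
    by intro_locales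
      (auto simp: centralizer_automorphism_axioms_def finite_order_automorphism_axioms_def)
  show ?thesis
    by (rule centralizer_maximal_abelian[OF t_abelian centralizer_abelian])
qed

end
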